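(* Let $G$ be a graph, $n\ge1$, $v_0\in G$, $\mathbf{v}_0=(v_0,\dots,v_0)\in G^n$ and $\mathbf{x}_0=v_0^n\in G^{(n)}$. Let $\eta:G^n\to G^{(n)}$ be the graph map $\eta(v_1,\dots,v_n)=v_1\cdots v_n$. Then the induced homomorphism $\eta_*:A_1(G^n,\mathbf{v}_0)\to A_1(G^{(n)},\mathbf{x}_0)$, $[f]\mapsto[\eta\circ f]$, is surjective.
   Context: All graphs are connected, simple and locally finite. $G^n$ is the Cartesian (box) product graph; $G^{(n)}$ is the $n$th reduced power (vertices: degree-$n$ monomials in vertices of $G$, adjacent iff they differ by moving one token along one edge of $G$). $A_1(K,w_0)$ is the discrete fundamental group: classes of graph maps $f:\mathbb{Z}\to K$ from the integer path graph with $f(i)=w_0$ for $|i|$ large, modulo based homotopy (graph maps $\mathbb{Z}\,\square\,I_m\to K$ with based rows interpolating), with concatenation as product. *)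

theory Defs
  imports Main "HOL-Library.Multiset"
begin

definition simple_graph :: "'a set \<Rightarrow> ('a \<Rightarrow> 'a \<Rightarrow> bool) \<Rightarrow> bool" where
  "simple_graph V E \<longleftrightarrow>
     (\<forall>x y. E x y \<longrightarrow> x \<in> V \<and> y \<in> V) \<and>
     (\<forall>x y. E x y \<longrightarrow> E y x) \<and> (\<forall>x. \<not> E x x)"

definition connected_graph :: "'a set \<Rightarrow> ('a \<Rightarrow> 'a \<Rightarrow> bool) \<Rightarrow> bool" where
  "connected_graph V E \<longleftrightarrow> V \<noteq> {} \<and> (\<forall>x\<in>V. \<forall>y\<in>V. (E\<^sup>*\<^sup>*) x y)"

definition locally_finite :: "'a set \<Rightarrow> ('a \<Rightarrow> 'a \<Rightarrow> bool) \<Rightarrow> bool" where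
  "locally_finite V E \<longleftrightarrow> (\<forall>x\<in>V. finite {y. E x y})"

definition graph_map :: "'a set \<Rightarrow> ('a \<Rightarrow> 'a \<Rightarrow> bool) \<Rightarrow> 'b set \<Rightarrow> ('b \<Rightarrow> 'b \<Rightarrow> bool)
    \<Rightarrow> ('a \<Rightarrow> 'b) \<Rightarrow> bool" where
  "graph_map V E W F f \<longleftrightarrow> (\<forall>x\<in>V. f x \<in> W) \<and>
     (\<forall>x\<in>V. \<forall>y\<in>V. E x y \<longrightarrow> f x = f y \<or> F (f x) (f y))"

definition cart_pow_V :: "'a set \<Rightarrow> nat \<Rightarrow> 'a list set" where
  "cart_pow_V V n = {xs. length xs = n \<and> set xs \<subseteq> V}"

definition cart_pow_E :: "('a \<Rightarrow> 'a \<Rightarrow> bool) \<Rightarrow> 'a list \<Rightarrow> 'a list \<Rightarrow> bool" where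
  "cart_pow_E E xs ys \<longleftrightarrow> (\<exists>i<length xs. \<exists>y. E (xs ! i) y \<and> ys = xs[i := y])"

text \<open>Reduced power G^(n): vertices are degree-n monomials (multisets of size n).\<close>
definition red_pow_V :: "'a set \<Rightarrow> nat \<Rightarrow> 'a multiset set" where
  "red_pow_V V n = {M. size M = n \<and> set_mset M \<subseteq> V}"

definition red_pow_E :: "('a \<Rightarrow> 'a \<Rightarrow> bool) \<Rightarrow> 'a multiset \<Rightarrow> 'a multiset \<Rightarrow> bool" where
  "red_pow_E E M N \<longleftrightarrow> (\<exists>u v. u \<in># M \<and> E u v \<and> N = M - {#u#} + {#v#})"

definition int_adj :: "int \<Rightarrow> int \<Rightarrow> bool" where
  "int_adj i j \<longleftrightarrow> \<bar>i - j\<bar> = 1"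

definition based_loops :: "'b set \<Rightarrow> ('b \<Rightarrow> 'b \<Rightarrow> bool) \<Rightarrow> 'b \<Rightarrow> (int \<Rightarrow> 'b) set" where
  "based_loops W F w0 = {f. graph_map UNIV int_adj W F f \<and>
       (\<exists>N::nat. \<forall>i. \<bar>i\<bar> \<ge> int N \<longrightarrow> f i = w0)}"

text \<open>Based homotopy: a graph map Z \<box> I_m \<rightarrow> K whose rows are based loops,
  interpolating from f (row 0) to g (row m).\<close>
definition based_homotopic :: "'b set \<Rightarrow> ('b \<Rightarrow> 'b \<Rightarrow> bool) \<Rightarrow> 'b
    \<Rightarrow> (int \<Rightarrow> 'b) \<Rightarrow> (int \<Rightarrow> 'b) \<Rightarrow> bool" where
  "based_homotopic W F w0 f g \<longleftrightarrow>
     (\<exists>(m::nat) (H :: int \<Rightarrow> nat \<Rightarrow> 'b).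
        (\<forall>i. H i 0 = f i) \<and> (\<forall>i. H i m = g i) \<and>
        (\<forall>j\<le>m. (\<lambda>i. H i j) \<in> based_loops W F w0) \<and>
        (\<forall>i. \<forall>j<m. H i j = H i (Suc j) \<or> F (H i j) (H i (Suc j))))"

definition A1 :: "'b set \<Rightarrow> ('b \<Rightarrow> 'b \<Rightarrow> bool) \<Rightarrow> 'b \<Rightarrow> (int \<Rightarrow> 'b) set set" where
  "A1 W F w0 = based_loops W F w0 //
      {(f, g). f \<in> based_loops W F w0 \<and> g \<in> based_loops W F w0 \<and> based_homotopic W F w0 f g}"

definition A1_class :: "'b set \<Rightarrow> ('b \<Rightarrow> 'b \<Rightarrow> bool) \<Rightarrow> 'b \<Rightarrow> (int \<Rightarrow> 'b) \<Rightarrow> (int \<Rightarrow> 'b) set" where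
  "A1_class W F w0 f = {g \<in> based_loops W F w0. based_homotopic W F w0 f g}"

end

theory Submission
  imports Defs
begin

text \<open>Moving one token of a monomial along an edge of G can be realised by moving the
  corresponding coordinate of any ordered tuple representing it; so every walk in the reduced
  power lifts, step by step, to a walk in the Cartesian power starting at v0^n. A based loop
  at v0^n lifts to a based loop, because (v0,...,v0) is the only tuple representing v0^n.\<close>

lemma red_pow_E_lift:
  assumes "red_pow_E E (mset xs) M"
  shows "\<exists>ys. cart_pow_E E xs ys \<and> mset ys = M"
proof -
  obtain u v where u: "u \<in># mset xs" "E u v" "M = mset xs - {#u#} + {#v#}"
    using assms unfolding red_pow_E_def by blast
  then obtain i where i: "i < length xs" "xs ! i = u"
    by (metis in_set_conv_nth set_mset_mset)
  have "cart_pow_E E xs (xs[i := v])"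
    unfolding cart_pow_E_def using i u by blast
  moreover have "mset (xs[i := v]) = M"
    using i u by (simp add: mset_update)
  ultimately show ?thesis by blast
qed

lemma cart_pow_E_sym:
  assumes "\<And>x y. E x y \<Longrightarrow> E y x" and "cart_pow_E E xs ys"
  shows "cart_pow_E E ys xs"
  using assms unfolding cart_pow_E_def
  by (metis length_list_update list_update_overwrite list_update_id nth_list_update_eq)

lemma mset_eq_replicate_mset_iff: "mset xs = replicate_mset n v \<longleftrightarrow> xs = replicate n v"
proof
  assume eq: "mset xs = replicate_mset n v"
  then have "length xs = n"
    by (metis size_mset size_replicate_mset)
  moreover have "\<forall>x\<in>set xs. x = v"
    using eq by (metis in_replicate_mset set_mset_mset)
  ultimately show "xs = replicate n v"
    by (metis replicate_length_same)
qed simp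

lemma mset_in_red_pow_V_iff: "mset xs \<in> red_pow_V V n \<longleftrightarrow> xs \<in> cart_pow_V V n"
  unfolding red_pow_V_def cart_pow_V_def by simp

lemma A1_memE:
  assumes "c \<in> A1 W F w0"
  obtains g where "g \<in> based_loops W F w0" and "c = A1_class W F w0 g"
  using assms unfolding A1_def A1_class_def quotient_def by blast

lemma graph_map_int_adjD:
  assumes "graph_map UNIV int_adj W F f"
  shows "f i \<in> W" and "f (i + 1) = f i \<or> F (f i) (f (i + 1))"
proof -
  have "int_adj i (i + 1)"
    by (simp add: int_adj_def)
  then have "f i = f (i + 1) \<or> F (f i) (f (i + 1))"
    using assms unfolding graph_map_def by blast
  then show "f (i + 1) = f i \<or> F (f i) (f (i + 1))"
    by auto
  show "f i \<in> W"
    using assms unfolding graph_map_def by blast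
qed

lemma graph_map_int_adjI:
  assumes "\<And>x y. F x y \<Longrightarrow> F y x"
    and "\<And>i. f i \<in> W" and "\<And>i. f (i + 1) = f i \<or> F (f i) (f (i + 1))"
  shows "graph_map UNIV int_adj W F f"
  unfolding graph_map_def
proof (intro conjI ballI impI)
  fix x y :: int
  assume "int_adj x y"
  then have "y = x + 1 \<or> x = y + 1"
    unfolding int_adj_def by arith
  then show "f x = f y \<or> F (f x) (f y)"
    using assms by metis
qed (use assms in blast)

lemma nat_walk_lift:
  assumes lift: "\<And>x y. R (p x) y \<Longrightarrow> \<exists>x'. S x x' \<and> p x' = y"
    and walk: "\<And>k. h (Suc k) = h k \<or> R (h k) (h (Suc k))"
    and start: "p x0 = h 0"
  shows "\<exists>l. l 0 = x0 \<and> (\<forall>k. p (l k) = h k \<and> (l (Suc k) = l k \<or> S (l k) (l (Suc k))))"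
proof -
  define l where
    "l = rec_nat x0 (\<lambda>k x. SOME x'. (x' = x \<or> S x x') \<and> p x' = h (Suc k))"
  have next_exists: "\<exists>x'. (x' = x \<or> S x x') \<and> p x' = h (Suc k)" if "p x = h k" for x k
    using walk[of k] lift[of x "h (Suc k)"] that by metis
  have step: "(l (Suc k) = l k \<or> S (l k) (l (Suc k))) \<and> p (l (Suc k)) = h (Suc k)"
    if "p (l k) = h k" for k
    using someI_ex[OF next_exists[OF that]] unfolding l_def by auto
  have l0: "l 0 = x0"
    by (simp add: l_def)
  have proj: "p (l k) = h k" for k
    by (induction k) (use l0 start step in auto)
  show ?thesis
    using l0 proj step by blast
qed

lemma int_walk_lift:
  assumes lift: "\<And>x y. R (p x) y \<Longrightarrow> \<exists>x'. S x x' \<and> p x' = y"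
    and walk: "\<And>i. g (i + 1) = g i \<or> R (g i) (g (i + 1))"
    and const: "\<And>i. i \<le> - int N \<Longrightarrow> g i = p x0"
  shows "\<exists>f. p \<circ> f = g \<and> (\<forall>i. f (i + 1) = f i \<or> S (f i) (f (i + 1)))"
proof -
  have "g (int (Suc k) - int N) = g (int k - int N)
      \<or> R (g (int k - int N)) (g (int (Suc k) - int N))" for k
    using walk[of "int k - int N"] by (simp add: add.commute add_diff_eq)
  moreover have "p x0 = g (int 0 - int N)"
    using const by simp
  ultimately have "\<exists>l. l 0 = x0 \<and> (\<forall>k. p (l k) = g (int k - int N)
              \<and> (l (Suc k) = l k \<or> S (l k) (l (Suc k))))"
    using nat_walk_lift[of R p S "\<lambda>k. g (int k - int N)" x0] lift by blast
  then obtain l where l0: "l 0 = x0"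
    and l: "\<And>k. p (l k) = g (int k - int N)" "\<And>k. l (Suc k) = l k \<or> S (l k) (l (Suc k))"
    by blast
  define f where "f i = l (nat (i + int N))" for i
  have "p (f i) = g i" for i
    using l(1)[of "nat (i + int N)"] const[of i] l0 unfolding f_def
    by (cases "i + int N \<ge> 0") auto
  moreover have "f (i + 1) = f i \<or> S (f i) (f (i + 1))" for i
  proof (cases "i + int N \<ge> 0")
    case True
    then have "nat (i + 1 + int N) = Suc (nat (i + int N))" by simp
    then show ?thesis using l(2) unfolding f_def by simp
  next
    case False
    then show ?thesis unfolding f_def by simp
  qed
  ultimately show ?thesis
    by (intro exI[of _ f]) auto
qed

theorem lemma4p5:
  fixes V :: "'a set" and E :: "'a \<Rightarrow> 'a \<Rightarrow> bool" and n :: nat and v0 :: 'a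
  assumes "simple_graph V E" and "connected_graph V E" and "locally_finite V E"
    and "n \<ge> 1" and "v0 \<in> V"
  shows "\<forall>c \<in> A1 (red_pow_V V n) (red_pow_E E) (replicate_mset n v0).
           \<exists>f \<in> based_loops (cart_pow_V V n) (cart_pow_E E) (replicate n v0).
             A1_class (red_pow_V V n) (red_pow_E E) (replicate_mset n v0) (mset \<circ> f) = c"
proof
  fix c
  assume "c \<in> A1 (red_pow_V V n) (red_pow_E E) (replicate_mset n v0)"
  then obtain g where g: "g \<in> based_loops (red_pow_V V n) (red_pow_E E) (replicate_mset n v0)"
    and c: "c = A1_class (red_pow_V V n) (red_pow_E E) (replicate_mset n v0) g"
    by (rule A1_memE)
  obtain N :: nat where N: "\<And>i. \<bar>i\<bar> \<ge> int N \<Longrightarrow> g i = replicate_mset n v0"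
    and gm: "graph_map UNIV int_adj (red_pow_V V n) (red_pow_E E) g"
    using g unfolding based_loops_def by blast
  have "g i = mset (replicate n v0)" if "i \<le> - int N" for i
    using N that by simp
  then obtain f where f: "mset \<circ> f = g"
    and f_walk: "\<And>i. f (i + 1) = f i \<or> cart_pow_E E (f i) (f (i + 1))"
    using int_walk_lift[where p = mset and R = "red_pow_E E" and S = "cart_pow_E E" and g = g,
        OF red_pow_E_lift graph_map_int_adjD(2)[OF gm]]
    by blast
  have "\<And>x y. E x y \<Longrightarrow> E y x"
    using assms(1) unfolding simple_graph_def by blast
  then have "graph_map UNIV int_adj (cart_pow_V V n) (cart_pow_E E) f"
    using graph_map_int_adjI cart_pow_E_sym f_walk graph_map_int_adjD(1)[OF gm]
      mset_in_red_pow_V_iff f by (metis comp_apply)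
  moreover have "\<forall>i. \<bar>i\<bar> \<ge> int N \<longrightarrow> f i = replicate n v0"
    using N f mset_eq_replicate_mset_iff by (metis comp_apply)
  ultimately have "f \<in> based_loops (cart_pow_V V n) (cart_pow_E E) (replicate n v0)"
    unfolding based_loops_def by blast
  then show "\<exists>f \<in> based_loops (cart_pow_V V n) (cart_pow_E E) (replicate n v0).
      A1_class (red_pow_V V n) (red_pow_E E) (replicate_mset n v0) (mset \<circ> f) = c"
    using f c by blast
qed

end
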